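(* Let $X$ be a continuum and $T\subset X$ a thick subcontinuum. Then $T$ contains every null-aposyndetic point of $X$.
   Context: A continuum is a nondegenerate compact connected Hausdorff space. A subcontinuum $T\subset X$ is thick if $T\neq X$ and $T$ has nonempty interior. A point $x\in X$ is null-aposyndetic if no proper subcontinuum of $X$ contains $x$ in its interior. *)

theory Defs
  imports "HOL-Analysis.Analysis"
begin

definition continuum :: "'a topology \<Rightarrow> bool" where
  "continuum X \<longleftrightarrow> compact_space X \<and> connected_space X \<and> Hausdorff_space X \<and>
     (\<exists>x y. x \<in> topspace X \<and> y \<in> topspace X \<and> x \<noteq> y)"

definition subcontinuum :: "'a topology \<Rightarrow> 'a set \<Rightarrow> bool" where
  "subcontinuum X T \<longleftrightarrow> T \<subseteq> topspace X \<and> continuum (subtopology X T)"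

definition thick :: "'a topology \<Rightarrow> 'a set \<Rightarrow> bool" where
  "thick X T \<longleftrightarrow> subcontinuum X T \<and> T \<noteq> topspace X \<and> X interior_of T \<noteq> {}"

definition null_aposyndetic :: "'a topology \<Rightarrow> 'a \<Rightarrow> bool" where
  "null_aposyndetic X x \<longleftrightarrow> x \<in> topspace X \<and>
     (\<forall>T. subcontinuum X T \<and> T \<noteq> topspace X \<longrightarrow> x \<notin> X interior_of T)"

end

theory Submission
  imports Defs
begin

text \<open>
  Suppose \<open>x \<notin> T\<close> and let \<open>Y = X - int T\<close>, a proper closed subset. By boundary bumping every
  component of \<open>Y\<close> meets the frontier of \<open>Y\<close>, which lies in \<open>T\<close>. Let \<open>C\<close> be the component
  of \<open>x\<close> in \<open>Y\<close>. If \<open>C \<supseteq> X - T\<close>, then \<open>C\<close> is a proper subcontinuum containing the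
  neighbourhood \<open>X - T\<close> of \<open>x\<close>. Otherwise some \<open>y \<in> X - T\<close> lies outside \<open>C\<close>; as components
  of the compact Hausdorff space \<open>Y\<close> are quasi-components, a set \<open>A\<close> clopen in \<open>Y\<close> contains
  \<open>x\<close> but not \<open>y\<close>. Every component of \<open>A\<close> meets \<open>T\<close>, so \<open>A \<union> T\<close> is a subcontinuum; it
  misses \<open>y\<close>, and it contains the neighbourhood \<open>A - T\<close> of \<open>x\<close>.
\<close>

lemma subcontinuumI:
  assumes "Hausdorff_space X" "compactin X M" "connectedin X M" "a \<in> M" "b \<in> M" "a \<noteq> b"
  shows "subcontinuum X M"
proof -
  have M: "M \<subseteq> topspace X"
    using assms(2) compactin_subset_topspace by blast
  then have "topspace (subtopology X M) = M"
    by (rule topspace_subtopology_subset)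
  then show ?thesis
    using assms M compact_space_subtopology Hausdorff_space_subtopology
    unfolding subcontinuum_def continuum_def connectedin_def by auto
qed

lemma connectedin_clopen_Un:
  assumes meet: "\<And>C. C \<in> connected_components_of (subtopology X Y) \<Longrightarrow> C \<inter> T \<noteq> {}"
    and T: "connectedin X T" "T \<noteq> {}"
    and A: "closedin (subtopology X Y) A" "openin (subtopology X Y) A"
  shows "connectedin X (A \<union> T)"
proof -
  let ?K = "connected_component_of_set (subtopology X Y)"
  have AY: "A \<subseteq> topspace (subtopology X Y)"
    using A(1) closedin_subset by blast
  have K_in_A: "?K a \<subseteq> A" if "a \<in> A" for a
    using connectedin_clopen_cases[OF connectedin_connected_component_of A] that AY
    by (metis connected_component_of_refl disjnt_iff mem_Collect_eq subsetD)
  have K_Un_T: "connectedin X (?K a \<union> T)" if "a \<in> A" for a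
  proof (rule connectedin_Un)
    show "connectedin X (?K a)"
      using connectedin_connected_component_of[of "subtopology X Y" a]
      by (simp add: connectedin_subtopology)
    have "?K a \<in> connected_components_of (subtopology X Y)"
      using AY that by (simp add: connected_component_in_connected_components_of subset_iff)
    then show "?K a \<inter> T \<noteq> {}"
      by (rule meet)
  qed (use T in auto)
  let ?U = "insert T ((\<lambda>a. ?K a \<union> T) ` A)"
  have "connectedin X (\<Union>?U)"
    by (rule connectedin_Union) (use K_Un_T T in auto)
  moreover have "\<Union>?U = A \<union> T"
    using K_in_A AY connected_component_of_refl by fastforce
  ultimately show ?thesis
    by simp
qed

lemma components_complement_interior_meet:
  assumes X: "connected_space X" "compact_space X" "Hausdorff_space X"
    and T: "closedin X T" "X interior_of T \<noteq> {}"
    and C: "C \<in> connected_components_of (subtopology X (topspace X - X interior_of T))"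
  shows "C \<inter> T \<noteq> {}"
proof -
  let ?Y = "topspace X - X interior_of T"
  have Y: "closedin X ?Y" "?Y \<noteq> topspace X"
    using T(2) interior_of_subset_topspace by fastforce+
  have "X frontier_of ?Y = X frontier_of (X interior_of T)"
    by (simp add: frontier_of_complement)
  also have "\<dots> \<subseteq> X closure_of T"
    unfolding frontier_of_def using closure_of_mono[OF interior_of_subset[of X T]] by blast
  finally have "X frontier_of ?Y \<subseteq> T"
    using T(1) by (simp add: closure_of_closedin)
  then show ?thesis
    using boundary_bumping_theorem_closed[OF X Y C] by blast
qed

lemma compact_Hausdorff_clopen_separates_components:
  assumes "compact_space X" "Hausdorff_space X" "x \<in> topspace X" "y \<in> topspace X"
    and "y \<notin> connected_component_of_set X x"
  obtains A where "closedin X A" "openin X A" "x \<in> A" "y \<notin> A"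
proof -
  have "quasi_component_of X x = connected_component_of X x"
    using assms(1,2) by (simp add: quasi_eq_connected_component_of)
  then have "\<not> quasi_component_of X x y"
    using assms(5) by simp
  then show ?thesis
    using assms(3,4) that unfolding quasi_component_of by blast
qed

lemma component_outside_interior_is_nbhd_subcontinuum:
  assumes X: "connected_space X" "compact_space X" "Hausdorff_space X"
    and T: "closedin X T" "X interior_of T \<noteq> {}"
    and x: "x \<in> topspace X" "x \<notin> T"
    and C: "C = connected_component_of_set (subtopology X (topspace X - X interior_of T)) x"
    and big: "topspace X - T \<subseteq> C"
  shows "subcontinuum X C \<and> C \<noteq> topspace X \<and> x \<in> X interior_of C"
proof -
  let ?Y = "topspace X - X interior_of T"
  have xY: "x \<in> ?Y"
    using x interior_of_subset by fastforce
  have comp: "C \<in> connected_components_of (subtopology X ?Y)"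
    using xY C by (simp add: connected_component_in_connected_components_of)
  have "closedin X C"
    using closedin_connected_components_of[OF comp] T(1)
    by (meson closedin_trans_full openin_interior_of closedin_diff closedin_topspace)
  then have "compactin X C"
    using X(2) closedin_compact_space by blast
  moreover have "connectedin X C"
    using connectedin_connected_component_of[of "subtopology X ?Y" x] C
    by (simp add: connectedin_subtopology)
  moreover obtain c where "c \<in> C" "c \<in> T"
    using components_complement_interior_meet[OF X T comp] by blast
  moreover have "x \<in> C"
    using xY C by (simp add: connected_component_of_refl)
  moreover have "C \<subseteq> ?Y"
    using C connected_component_of_subset_topspace by fastforce
  moreover have "x \<in> X interior_of C"
    using interior_of_maximal[OF big] T(1) x by blast
  ultimately show ?thesis
    using subcontinuumI[OF X(3)] x T(2) interior_of_subset_topspace by fastforce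
qed

lemma clopen_Un_is_nbhd_subcontinuum:
  assumes X: "connected_space X" "compact_space X" "Hausdorff_space X"
    and T: "closedin X T" "connectedin X T" "X interior_of T \<noteq> {}"
    and A: "closedin (subtopology X (topspace X - X interior_of T)) A"
      "openin (subtopology X (topspace X - X interior_of T)) A"
    and x: "x \<in> A" "x \<notin> T"
    and y: "y \<in> topspace X" "y \<notin> A" "y \<notin> T"
  shows "subcontinuum X (A \<union> T) \<and> A \<union> T \<noteq> topspace X \<and> x \<in> X interior_of (A \<union> T)"
proof -
  let ?Y = "topspace X - X interior_of T"
  have "T \<noteq> {}"
    using T(3) interior_of_subset by (metis subset_empty)
  then obtain t where "t \<in> T"
    by blast
  have "closedin X A"
    using A(1) by (simp add: closedin_closed_subtopology openin_interior_of closedin_diff)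
  then have "compactin X (A \<union> T)"
    using T(1) X(2) closedin_Un closedin_compact_space by blast
  moreover have "connectedin X (A \<union> T)"
    using connectedin_clopen_Un[OF components_complement_interior_meet[OF X T(1,3)]
        T(2) \<open>T \<noteq> {}\<close> A] .
  moreover obtain U where U: "openin X U" "A = U \<inter> ?Y"
    using A(2) by (auto simp: openin_subtopology)
  have "U \<inter> (topspace X - T) \<subseteq> X interior_of (A \<union> T)"
    using U T(1) interior_of_subset
    by (intro interior_of_maximal) (fastforce simp: openin_diff)+
  then have "x \<in> X interior_of (A \<union> T)"
    using U x by auto
  ultimately show ?thesis
    using subcontinuumI[OF X(3)] x y \<open>t \<in> T\<close> by blast
qed

lemma nbhd_subcontinuum_outside_thick:
  assumes X: "connected_space X" "compact_space X" "Hausdorff_space X"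
    and T: "closedin X T" "connectedin X T" "X interior_of T \<noteq> {}"
    and x: "x \<in> topspace X" "x \<notin> T"
  obtains M where "subcontinuum X M" "M \<noteq> topspace X" "x \<in> X interior_of M"
proof -
  let ?Y = "subtopology X (topspace X - X interior_of T)"
  show thesis
  proof (cases "topspace X - T \<subseteq> connected_component_of_set ?Y x")
    case True
    then show thesis
      using component_outside_interior_is_nbhd_subcontinuum[OF X T(1,3) x refl] that by blast
  next
    case False
    then obtain y where y: "y \<in> topspace X" "y \<notin> T" "y \<notin> connected_component_of_set ?Y x"
      by blast
    have "x \<in> topspace ?Y" "y \<in> topspace ?Y"
      using x y interior_of_subset by fastforce+
    moreover have "compact_space ?Y" "Hausdorff_space ?Y"
      using X by (simp_all add: Hausdorff_space_subtopology closedin_compact_space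
          compact_space_subtopology closedin_diff openin_interior_of)
    ultimately obtain A where "closedin ?Y A" "openin ?Y A" "x \<in> A" "y \<notin> A"
      using compact_Hausdorff_clopen_separates_components y(3) by metis
    then show thesis
      using clopen_Un_is_nbhd_subcontinuum[OF X T] x y that by blast
  qed
qed

theorem mainTheorem16:
  fixes X :: "'a topology" and T :: "'a set" and x :: 'a
  assumes "continuum X" and "thick X T" and "null_aposyndetic X x"
  shows "x \<in> T"
proof (rule ccontr)
  assume "x \<notin> T"
  have X: "connected_space X" "compact_space X" "Hausdorff_space X"
    using assms(1) by (auto simp: continuum_def)
  have "compactin X T" "connectedin X T" "X interior_of T \<noteq> {}"
    using assms(2) unfolding thick_def subcontinuum_def continuum_def
    by (auto simp: compactin_subspace connectedin_def)
  then have T: "closedin X T" "connectedin X T" "X interior_of T \<noteq> {}"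
    using X(3) compactin_imp_closedin by auto
  have "x \<in> topspace X"
    using assms(3) by (simp add: null_aposyndetic_def)
  then obtain M where "subcontinuum X M" "M \<noteq> topspace X" "x \<in> X interior_of M"
    using nbhd_subcontinuum_outside_thick[OF X T] \<open>x \<notin> T\<close> by blast
  then show False
    using assms(3) by (auto simp: null_aposyndetic_def)
qed

end
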